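(* Let $A \in \{0,1\}^{n \times n}$ be a uniformly random binary matrix (entries i.i.d. taking values $0$ and $1$ with probability $1/2$ each). Then \[ \mathbb{P}[A \text{ is factorizable}] \leq \sum_{(n_1,n_2) \in \mathcal{C}} \frac{2^{n_1^2+n_2^2}}{2^{n^2}}, \] where $\mathcal{C}$ is the set of compatible pairs for $n$.
   Context: A compatible pair for $n$ is a pair of integers $(n_1,n_2)$ with $n_1,n_2$ positive divisors of $n$, $n_1,n_2\notin\{1,n\}$, and $n_1n_2=n$. A binary matrix $A\in\{0,1\}^{n\times n}$ is factorizable (decomposable) if there exist $\ell>1$ and matrices $A_i\in\{0,1\}^{n_i\times n_i}$ with $n_i>1$ such that $A=A_1\otimes\cdots\otimes A_\ell$, where the Kronecker product uses Boolean arithmetic ($1+1=1$). *)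

theory Defs
  imports "HOL-Probability.Probability"
begin

text \<open>Binary n x n matrices are modelled as Boolean-valued functions on index pairs,
  extensional: entries outside {0..<n} x {0..<n} are False. True = 1, False = 0.\<close>

type_synonym bmat = "nat \<Rightarrow> nat \<Rightarrow> bool"

definition bmats :: "nat \<Rightarrow> bmat set" where
  "bmats n = {A. \<forall>i j. (n \<le> i \<or> n \<le> j) \<longrightarrow> \<not> A i j}"

definition bkron :: "nat \<Rightarrow> nat \<Rightarrow> bmat \<Rightarrow> bmat \<Rightarrow> bmat" where
  "bkron m p A B = (\<lambda>i j. i < m * p \<and> j < m * p \<and>
      A (i div p) (j div p) \<and> B (i mod p) (j mod p))"

fun bkron_list :: "(nat \<times> bmat) list \<Rightarrow> bmat" where
  "bkron_list [] = (\<lambda>i j. i = 0 \<and> j = 0)"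
| "bkron_list ((k, A) # fs) = bkron k (prod_list (map fst fs)) A (bkron_list fs)"

definition factorizable :: "nat \<Rightarrow> bmat \<Rightarrow> bool" where
  "factorizable n A \<longleftrightarrow> (\<exists>fs. length fs > 1 \<and>
      (\<forall>(k, B) \<in> set fs. k > 1 \<and> B \<in> bmats k) \<and>
      prod_list (map fst fs) = n \<and> A = bkron_list fs)"

definition compatible_pairs :: "nat \<Rightarrow> (nat \<times> nat) set" where
  "compatible_pairs n = {(n1, n2). n1 > 0 \<and> n2 > 0 \<and> n1 dvd n \<and> n2 dvd n \<and>
      n1 \<notin> {1, n} \<and> n2 \<notin> {1, n} \<and> n1 * n2 = n}"

end

theory Submission
  imports Defs
begin

text \<open>Every factorization \<open>A = A\<^sub>1 \<otimes> A\<^sub>2 \<otimes> \<dots> \<otimes> A\<^sub>\<ell>\<close> groups as \<open>A\<^sub>1 \<otimes> (A\<^sub>2 \<otimes> \<dots> \<otimes> A\<^sub>\<ell>)\<close>, a product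
  of two factors whose sizes form a compatible pair \<open>(n\<^sub>1, n\<^sub>2)\<close> for \<open>n\<close>. Hence the factorizable
  matrices lie in the union, over compatible pairs, of the images of
  \<open>bmats n\<^sub>1 \<times> bmats n\<^sub>2\<close> under the Kronecker product, a set of at most
  \<open>\<Sum> 2^(n\<^sub>1\<^sup>2 + n\<^sub>2\<^sup>2)\<close> elements among the \<open>2^(n\<^sup>2)\<close> equally likely matrices.\<close>

lemma bmats_eq_image_Pow:
  "bmats n = (\<lambda>S i j. (i, j) \<in> S) ` Pow ({..<n} \<times> {..<n})"
proof (intro equalityI subsetI)
  fix A assume "A \<in> bmats n"
  then have "{(i, j). A i j} \<in> Pow ({..<n} \<times> {..<n})"
    unfolding bmats_def by (auto simp: not_le[symmetric])
  moreover have "A = (\<lambda>i j. (i, j) \<in> {(i, j). A i j})" by simp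
  ultimately show "A \<in> (\<lambda>S i j. (i, j) \<in> S) ` Pow ({..<n} \<times> {..<n})" by blast
qed (auto simp: bmats_def)

lemma inj_on_set_to_bmat: "inj_on (\<lambda>S i j. (i, j) \<in> S) X"
  by (rule inj_onI) (metis pred_equals_eq2)

lemma finite_bmats: "finite (bmats n)"
  unfolding bmats_eq_image_Pow by simp

lemma card_bmats: "card (bmats n) = 2 ^ (n\<^sup>2)"
  unfolding bmats_eq_image_Pow card_image[OF inj_on_set_to_bmat]
  by (simp add: card_Pow card_cartesian_product power2_eq_square)

lemma bmats_nonempty: "bmats n \<noteq> {}"
  unfolding bmats_def by auto

lemma bkron_in_bmats: "bkron m p A B \<in> bmats (m * p)"
  unfolding bmats_def bkron_def by auto

lemma bkron_list_in_bmats: "bkron_list fs \<in> bmats (prod_list (map fst fs))"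
  by (cases fs) (auto simp: bmats_def bkron_def)

lemma one_less_prod_list:
  fixes xs :: "nat list"
  assumes "\<forall>x\<in>set xs. 1 < x" and "xs \<noteq> []"
  shows "1 < prod_list xs"
  using assms
proof (induction xs)
  case (Cons x xs)
  then show ?case
    by (cases "xs = []") (auto intro: one_less_mult)
qed simp

lemma compatible_pair_mult:
  assumes "1 < a" and "1 < b"
  shows "(a, b) \<in> compatible_pairs (a * b)"
  using assms unfolding compatible_pairs_def by auto

lemma finite_compatible_pairs: "finite (compatible_pairs n)"
proof (rule finite_subset)
  show "compatible_pairs n \<subseteq> {..n} \<times> {..n}"
    unfolding compatible_pairs_def by (auto intro: dvd_imp_le)
qed simp

lemma factorizable_imp_bkron:
  assumes "factorizable n A"
  obtains n1 n2 B C where "(n1, n2) \<in> compatible_pairs n"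
    and "B \<in> bmats n1" and "C \<in> bmats n2" and "A = bkron n1 n2 B C"
proof -
  from assms obtain fs where len: "length fs > 1"
    and factors: "\<forall>(k, B) \<in> set fs. k > 1 \<and> B \<in> bmats k"
    and size: "prod_list (map fst fs) = n" and A: "A = bkron_list fs"
    unfolding factorizable_def by blast
  then obtain k B rest where fs: "fs = (k, B) # rest" and "rest \<noteq> []"
    by (cases fs) auto
  define m where "m = prod_list (map fst rest)"
  have "1 < k" and "B \<in> bmats k"
    using factors fs by auto
  moreover have "1 < m"
    unfolding m_def using factors fs \<open>rest \<noteq> []\<close> by (intro one_less_prod_list) auto
  ultimately show thesis
    using that[of k m B "bkron_list rest"] compatible_pair_mult[of k m]
      bkron_list_in_bmats[of rest] size A fs
    by (simp add: m_def)
qed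

lemma factorizable_subset_Union_bkron:
  "{A. factorizable n A} \<subseteq>
     (\<Union>(n1, n2)\<in>compatible_pairs n. case_prod (bkron n1 n2) ` (bmats n1 \<times> bmats n2))"
  by (force elim: factorizable_imp_bkron)

lemma card_factorizable_le:
  "card {A \<in> bmats n. factorizable n A}
     \<le> (\<Sum>(n1, n2)\<in>compatible_pairs n. 2 ^ (n1\<^sup>2 + n2\<^sup>2))"
proof -
  let ?U = "\<Union>(n1, n2)\<in>compatible_pairs n. case_prod (bkron n1 n2) ` (bmats n1 \<times> bmats n2)"
  have "card {A \<in> bmats n. factorizable n A} \<le> card ?U"
    using factorizable_subset_Union_bkron[of n]
    by (intro card_mono) (auto simp: finite_compatible_pairs finite_bmats)
  also have "\<dots> \<le> (\<Sum>(n1, n2)\<in>compatible_pairs n. card (case_prod (bkron n1 n2) ` (bmats n1 \<times> bmats n2)))"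
    using card_UN_le[OF finite_compatible_pairs] by (simp add: case_prod_beta')
  also have "\<dots> \<le> (\<Sum>(n1, n2)\<in>compatible_pairs n. card (bmats n1 \<times> bmats n2))"
    by (intro sum_mono, clarify, rule card_image_le) (simp add: finite_bmats)
  also have "\<dots> = (\<Sum>(n1, n2)\<in>compatible_pairs n. 2 ^ (n1\<^sup>2 + n2\<^sup>2))"
    by (intro sum.cong) (auto simp: card_cartesian_product card_bmats power_add)
  finally show ?thesis .
qed

theorem lemma2:
  fixes n :: nat
  shows "measure_pmf.prob (pmf_of_set (bmats n)) {A. factorizable n A}
         \<le> (\<Sum>(n1, n2)\<in>compatible_pairs n. 2 ^ (n1^2 + n2^2) / 2 ^ (n^2) :: real)"
proof -
  have "measure_pmf.prob (pmf_of_set (bmats n)) {A. factorizable n A}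
      = card {A \<in> bmats n. factorizable n A} / 2 ^ (n\<^sup>2)"
    by (simp add: measure_pmf_of_set bmats_nonempty finite_bmats card_bmats Collect_conj_eq)
  also have "\<dots> \<le> (\<Sum>(n1, n2)\<in>compatible_pairs n. 2 ^ (n1\<^sup>2 + n2\<^sup>2)) / 2 ^ (n\<^sup>2)"
  proof (rule divide_right_mono)
    show "real (card {A \<in> bmats n. factorizable n A})
        \<le> (\<Sum>(n1, n2)\<in>compatible_pairs n. 2 ^ (n1\<^sup>2 + n2\<^sup>2))"
      using card_factorizable_le[of n, THEN of_nat_mono[where 'a = real]]
      by (simp add: of_nat_sum case_prod_beta')
  qed simp
  also have "\<dots> = (\<Sum>(n1, n2)\<in>compatible_pairs n. 2 ^ (n1\<^sup>2 + n2\<^sup>2) / 2 ^ (n\<^sup>2))"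
    by (simp add: sum_divide_distrib case_prod_beta')
  finally show ?thesis .
qed

end
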